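(* Let $\Sigma$ be a non-empty finite or countably infinite alphabet, $p$ a positive Bernoulli distribution on $\Sigma$, and $A=(Q,\Sigma,\delta,q_s,F)$ a strongly connected DFA with $F\ne\emptyset$. Then there is a real number $b$ with $0<b\le1$ such that for all $\epsilon>0$, $\lim_{n\to\infty}\mu_p(D_n^p(b,\epsilon))=1$.
   Context: $p:\Sigma\to(0,1]$ with $\sum_ap(a)=1$; $\mu_p(a_1\cdots a_n)=\prod_ip(a_i)$, $\mu_p(W)=\sum_{w\in W}\mu_p(w)$. $A_q$ is $A$ with start state $q$; for $w=w_1\cdots w_n$, $A_q[w]$ is the subsequence of those $w_i$ with $\delta^*(q,w_1\cdots w_{i-1})\in F$; $\#_a(v)$ counts occurrences of $a$ in $v$. Define $D_n^p(b,\epsilon,q)=\{w\in\Sigma^n: |A_q[w]|>bn\ \text{and}\ \sup_{a\in\Sigma}|\#_a(A_q[w])/|A_q[w]|-p(a)|<\epsilon\}$ and $D_n^p(b,\epsilon)=\bigcap_{q\in Q}D_n^p(b,\epsilon,q)$. $A$ is strongly connected if its underlying directed graph is strongly connected. *)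

theory Defs
  imports "HOL-Analysis.Analysis"
begin

fun dfa_run :: "('q \<Rightarrow> 'a \<Rightarrow> 'q) \<Rightarrow> 'q \<Rightarrow> 'a list \<Rightarrow> 'q" where
  "dfa_run \<delta> q [] = q"
| "dfa_run \<delta> q (a # w) = dfa_run \<delta> (\<delta> q a) w"

fun sel_sub :: "('q \<Rightarrow> 'a \<Rightarrow> 'q) \<Rightarrow> 'q set \<Rightarrow> 'q \<Rightarrow> 'a list \<Rightarrow> 'a list" where
  "sel_sub \<delta> F q [] = []"
| "sel_sub \<delta> F q (a # w) = (if q \<in> F then [a] else []) @ sel_sub \<delta> F (\<delta> q a) w"

definition mu_p :: "('a \<Rightarrow> real) \<Rightarrow> 'a list set \<Rightarrow> real" where
  "mu_p p W = (\<Sum>\<^sub>\<infinity>w\<in>W. prod_list (map p w))"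

definition strongly_connected ::
  "'q set \<Rightarrow> 'a set \<Rightarrow> ('q \<Rightarrow> 'a \<Rightarrow> 'q) \<Rightarrow> bool" where
  "strongly_connected Q \<Sigma> \<delta> \<longleftrightarrow>
     (\<forall>q\<in>Q. \<forall>q'\<in>Q. (q, q') \<in> {(r, \<delta> r a) | r a. r \<in> Q \<and> a \<in> \<Sigma>}\<^sup>*)"

definition D_q ::
  "'a set \<Rightarrow> ('a \<Rightarrow> real) \<Rightarrow> ('q \<Rightarrow> 'a \<Rightarrow> 'q) \<Rightarrow> 'q set \<Rightarrow> nat \<Rightarrow> real \<Rightarrow> real \<Rightarrow> 'q \<Rightarrow> 'a list set" where
  "D_q \<Sigma> p \<delta> F n b \<epsilon> q =
     {w. set w \<subseteq> \<Sigma> \<and> length w = n \<and>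
         real (length (sel_sub \<delta> F q w)) > b * real n \<and>
         (SUP a\<in>\<Sigma>. \<bar>real (count_list (sel_sub \<delta> F q w) a) / real (length (sel_sub \<delta> F q w)) - p a\<bar>) < \<epsilon>}"

definition D ::
  "'a set \<Rightarrow> ('a \<Rightarrow> real) \<Rightarrow> 'q set \<Rightarrow> ('q \<Rightarrow> 'a \<Rightarrow> 'q) \<Rightarrow> 'q set \<Rightarrow> nat \<Rightarrow> real \<Rightarrow> real \<Rightarrow> 'a list set" where
  "D \<Sigma> p Q \<delta> F n b \<epsilon> = {w. set w \<subseteq> \<Sigma> \<and> length w = n} \<inter> (\<Inter>q\<in>Q. D_q \<Sigma> p \<delta> F n b \<epsilon> q)"

end

theory Submission
  imports Defs "HOL-Probability.Probability"
begin

text \<open>Under \<mu>_p the letters of a word are i.i.d., so the DFA started in q runs a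
  Markov chain on Q.  Strong connectivity yields a bounded potential V \<ge> 0 on Q whose
  expected value drops by at least 1 after every step taken outside F.  Summing the
  martingale differences V(\<delta> s a) - E V(\<delta> s \<cdot>) along a word, whose second moment grows
  only linearly, shows by Chebyshev that with probability tending to 1 a word of length n
  spends a linear number of steps in F, simultaneously for all start states.  The same
  second-moment bound applied to the differences [a = c] - p(c) on the steps taken in F
  controls the letter frequencies of A_q[w] for the finitely many letters c carrying
  all but \<epsilon>/4 of the mass; the remaining letters are then rare automatically.\<close>

section \<open>Bounded functions on discrete distributions\<close>

lemma integrable_pmf_bounded:
  fixes f :: "'b \<Rightarrow> real"
  assumes "\<And>x. x \<in> set_pmf M \<Longrightarrow> \<bar>f x\<bar> \<le> B"
  shows "integrable (measure_pmf M) f"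
  by (rule measure_pmf.integrable_const_bound[where B=B]) (auto simp: AE_measure_pmf_iff assms)

lemma expectation_pmf_le_const:
  fixes f :: "'b \<Rightarrow> real"
  assumes "\<And>x. x \<in> set_pmf M \<Longrightarrow> f x \<le> c" "\<And>x. x \<in> set_pmf M \<Longrightarrow> \<bar>f x\<bar> \<le> B"
  shows "measure_pmf.expectation M f \<le> c"
proof -
  have "measure_pmf.expectation M f \<le> measure_pmf.expectation M (\<lambda>_. c)"
    by (intro integral_mono_AE integrable_pmf_bounded[OF assms(2)])
      (auto simp: AE_measure_pmf_iff assms(1))
  thus ?thesis by simp
qed

lemma expectation_pmf_ge_const:
  fixes f :: "'b \<Rightarrow> real"
  assumes "\<And>x. x \<in> set_pmf M \<Longrightarrow> c \<le> f x" "\<And>x. x \<in> set_pmf M \<Longrightarrow> \<bar>f x\<bar> \<le> B"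
  shows "c \<le> measure_pmf.expectation M f"
proof -
  have "measure_pmf.expectation M (\<lambda>_. c) \<le> measure_pmf.expectation M f"
    by (intro integral_mono_AE integrable_pmf_bounded[OF assms(2)])
      (auto simp: AE_measure_pmf_iff assms(1))
  thus ?thesis by simp
qed

lemma abs_expectation_pmf_le:
  fixes f :: "'b \<Rightarrow> real"
  assumes "\<And>x. x \<in> set_pmf M \<Longrightarrow> \<bar>f x\<bar> \<le> B"
  shows "\<bar>measure_pmf.expectation M f\<bar> \<le> B"
proof -
  have "measure_pmf.expectation M f \<le> B"
    by (rule expectation_pmf_le_const[where B=B]) (use assms in \<open>auto simp: abs_le_iff\<close>)
  moreover have "-B \<le> measure_pmf.expectation M f"
  proof (rule expectation_pmf_ge_const[where B=B])
    fix x assume "x \<in> set_pmf M"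
    from assms[OF this] show "-B \<le> f x" by linarith
  qed (rule assms)
  ultimately show ?thesis by auto
qed

lemma expectation_bind_pmf_bounded:
  fixes f :: "'b \<Rightarrow> real"
  assumes "\<And>y. y \<in> set_pmf (bind_pmf M N) \<Longrightarrow> \<bar>f y\<bar> \<le> B"
  shows "measure_pmf.expectation (bind_pmf M N) f
           = measure_pmf.expectation M (\<lambda>x. measure_pmf.expectation (N x) f)"
proof -
  define g where "g y = (if y \<in> set_pmf (bind_pmf M N) then f y else 0)" for y
  have g_bound: "\<bar>g y\<bar> \<le> \<bar>B\<bar>" for y
    using assms unfolding g_def by (auto, fastforce)
  have "measure_pmf.expectation (bind_pmf M N) f = measure_pmf.expectation (bind_pmf M N) g"
    by (intro integral_cong_AE) (auto simp: g_def AE_measure_pmf_iff)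
  also have "\<dots> = measure_pmf.expectation M (\<lambda>x. measure_pmf.expectation (N x) g)"
    unfolding measure_pmf_bind
    by (rule integral_bind[where K="count_space UNIV" and B="\<bar>B\<bar>" and B'=1])
      (auto simp: g_bound space_subprob_algebra measure_pmf.emeasure_space_1
         prob_space_imp_subprob_space prob_space_measure_pmf
         intro!: measurable_count_space_eq1[THEN iffD2] prob_space.finite_measure)
  also have "\<dots> = measure_pmf.expectation M (\<lambda>x. measure_pmf.expectation (N x) f)"
    by (intro integral_cong_AE) (auto simp: g_def AE_measure_pmf_iff intro!: integral_cong_AE)
  finally show ?thesis .
qed

lemma Chebyshev_pmf:
  fixes f :: "'b \<Rightarrow> real"
  assumes "\<And>x. x \<in> set_pmf M \<Longrightarrow> \<bar>f x\<bar> \<le> B" "c > 0"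
  shows "measure_pmf.prob M {x. c \<le> \<bar>f x\<bar>} \<le> measure_pmf.expectation M (\<lambda>x. (f x)\<^sup>2) / c\<^sup>2"
proof -
  have "\<bar>(f x)\<^sup>2\<bar> \<le> B\<^sup>2" if "x \<in> set_pmf M" for x
    using power_mono[OF assms(1)[OF that], of 2] by simp
  hence int: "integrable (measure_pmf M) (\<lambda>x. (f x)\<^sup>2)"
    by (rule integrable_pmf_bounded)
  have "c \<le> \<bar>y\<bar> \<longleftrightarrow> c\<^sup>2 \<le> y\<^sup>2" for y
    using assms(2) by (metis abs_le_square_iff abs_of_pos)
  hence "{x. c \<le> \<bar>f x\<bar>} = {x \<in> space (measure_pmf M). c\<^sup>2 \<le> (f x)\<^sup>2}"
    by auto
  moreover have "measure_pmf.prob M {x \<in> space (measure_pmf M). c\<^sup>2 \<le> (f x)\<^sup>2}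
                   \<le> measure_pmf.expectation M (\<lambda>x. (f x)\<^sup>2) / c\<^sup>2"
    by (rule integral_Markov_inequality_measure[OF int, where A=UNIV]) (use assms(2) in auto)
  ultimately show ?thesis by simp
qed

lemma measure_pmf_UN_le:
  assumes "finite I" "\<And>i. i \<in> I \<Longrightarrow> measure_pmf.prob M (A i) \<le> e i"
  shows "measure_pmf.prob M (\<Union>i\<in>I. A i) \<le> sum e I"
proof -
  have "measure_pmf.prob M (\<Union>i\<in>I. A i) \<le> (\<Sum>i\<in>I. measure_pmf.prob M (A i))"
    by (rule measure_pmf.finite_measure_subadditive_finite) (use assms(1) in auto)
  also have "\<dots> \<le> sum e I"
    by (rule sum_mono) (rule assms(2))
  finally show ?thesis .
qed

lemma sum_count_list_le_length: "finite T \<Longrightarrow> (\<Sum>c\<in>T. count_list l c) \<le> length l"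
proof (induction l)
  case Nil
  thus ?case by simp
next
  case (Cons x l)
  have "(\<Sum>c\<in>T. count_list (x # l) c)
          = (\<Sum>c\<in>T. count_list l c) + (\<Sum>c\<in>T. if x = c then 1 else 0)"
    by (auto simp: sum.distrib[symmetric] intro!: sum.cong)
  also have "(\<Sum>c\<in>T. if x = c then 1 else (0::nat)) \<le> 1"
    using Cons.prems by (simp add: sum.If_cases Int_def)
  finally show ?case
    using Cons by simp
qed

section \<open>Random words read by a DFA\<close>

locale bernoulli_dfa =
  fixes \<Sigma> :: "'a set" and p :: "'a \<Rightarrow> real"
    and Q :: "'q set" and \<delta> :: "'q \<Rightarrow> 'a \<Rightarrow> 'q" and F :: "'q set"
  assumes p_pos: "a \<in> \<Sigma> \<Longrightarrow> 0 < p a"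
    and p_has_sum: "(p has_sum 1) \<Sigma>"
    and finite_Q: "finite Q"
    and \<delta>_closed: "q \<in> Q \<Longrightarrow> a \<in> \<Sigma> \<Longrightarrow> \<delta> q a \<in> Q"
    and F_subset: "F \<subseteq> Q"
begin

lemma \<Sigma>_nonempty: "\<Sigma> \<noteq> {}"
proof
  assume "\<Sigma> = {}"
  hence "(p has_sum 0) \<Sigma>" by simp
  with p_has_sum show False
    using has_sum_unique by fastforce
qed

lemma sum_p_le_1: "finite X \<Longrightarrow> X \<subseteq> \<Sigma> \<Longrightarrow> sum p X \<le> 1"
  by (rule has_sum_mono_neutral[OF has_sum_finite p_has_sum])
    (use p_pos in \<open>auto simp: less_imp_le\<close>)

lemma p_le_1: "a \<in> \<Sigma> \<Longrightarrow> p a \<le> 1"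
  using sum_p_le_1[of "{a}"] by simp

lemma finite_subset_mass_close:
  assumes "\<epsilon> > 0"
  obtains S where "finite S" "S \<subseteq> \<Sigma>" "1 - sum p S \<le> \<epsilon>"
proof -
  have "eventually (\<lambda>X. dist (sum p X) 1 < \<epsilon>) (finite_subsets_at_top \<Sigma>)"
    using p_has_sum assms by (intro tendstoD) (auto simp: has_sum_def)
  then obtain S where "finite S" "S \<subseteq> \<Sigma>" "dist (sum p S) 1 < \<epsilon>"
    unfolding eventually_finite_subsets_at_top by blast
  thus ?thesis
    using that by (auto simp: dist_real_def)
qed

lemma dfa_run_in_Q: "q \<in> Q \<Longrightarrow> set w \<subseteq> \<Sigma> \<Longrightarrow> dfa_run \<delta> q w \<in> Q"
  by (induction w arbitrary: q) (auto simp: \<delta>_closed)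

definition letter_weight :: "'a \<Rightarrow> real" where
  "letter_weight a = (if a \<in> \<Sigma> then p a else 0)"

lemma letter_weight_nonneg: "0 \<le> letter_weight a"
  using p_pos by (auto simp: letter_weight_def less_imp_le)

lemma nn_integral_letter_weight:
  "(\<integral>\<^sup>+a. ennreal (letter_weight a) \<partial>count_space UNIV) = 1"
proof -
  have has_sum: "(letter_weight has_sum 1) UNIV"
    using p_has_sum by (subst has_sum_cong_neutral[where g=p and T=\<Sigma>]) (auto simp: letter_weight_def)
  hence "Infinite_Sum.abs_summable_on letter_weight UNIV"
    using letter_weight_nonneg by (simp add: abs_of_nonneg has_sum_iff)
  hence summable: "Infinite_Set_Sum.abs_summable_on letter_weight UNIV"
    using abs_summable_equivalent by blast
  have "(\<integral>\<^sup>+a. ennreal (letter_weight a) \<partial>count_space UNIV) = ennreal (infsetsum letter_weight UNIV)"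
    by (rule nn_integral_conv_infsetsum[OF summable]) (simp add: letter_weight_nonneg)
  also have "infsetsum letter_weight UNIV = 1"
    using infsetsum_infsum[OF summable] has_sum by (simp add: has_sum_iff)
  finally show ?thesis by simp
qed

definition letter_pmf :: "'a pmf" where
  "letter_pmf = embed_pmf letter_weight"

lemma pmf_letter_pmf: "pmf letter_pmf a = letter_weight a"
  unfolding letter_pmf_def
  by (rule pmf_embed_pmf[OF letter_weight_nonneg nn_integral_letter_weight])

lemma set_letter_pmf: "set_pmf letter_pmf = \<Sigma>"
  unfolding letter_pmf_def using p_pos
  by (subst set_embed_pmf[OF letter_weight_nonneg nn_integral_letter_weight])
    (auto simp: letter_weight_def dest: p_pos)

abbreviation word_pmf :: "nat \<Rightarrow> 'a list pmf" where
  "word_pmf n \<equiv> replicate_pmf n letter_pmf"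

lemma set_word_pmf: "set_pmf (word_pmf n) = {w. set w \<subseteq> \<Sigma> \<and> length w = n}"
  by (auto simp: set_replicate_pmf set_letter_pmf)

lemma word_pmf_Suc: "word_pmf (Suc n) = bind_pmf letter_pmf (\<lambda>a. map_pmf (Cons a) (word_pmf n))"
  by (simp add: map_pmf_def)

lemma pmf_word_pmf:
  "pmf (word_pmf n) w = (if set w \<subseteq> \<Sigma> \<and> length w = n then prod_list (map p w) else 0)"
proof (induction n arbitrary: w)
  case 0
  thus ?case by (cases w) auto
next
  case (Suc n)
  show ?case
  proof (cases w)
    case Nil
    have "pmf (map_pmf (Cons a) (word_pmf n)) [] = 0" for a
      by (rule pmf_map_outside) auto
    thus ?thesis
      using Nil by (simp add: word_pmf_Suc pmf_bind)
  next
    case (Cons a v)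
    have "pmf (map_pmf (Cons b) (word_pmf n)) (a # v) = indicator {a} b * pmf (word_pmf n) v" for b
      by (cases "b = a") (auto simp: pmf_map_inj' inj_on_def intro!: pmf_map_outside)
    hence "pmf (word_pmf (Suc n)) w
             = measure_pmf.expectation letter_pmf (\<lambda>b. indicator {a} b * pmf (word_pmf n) v)"
      by (simp only: Cons word_pmf_Suc pmf_bind)
    also have "\<dots> = letter_weight a * pmf (word_pmf n) v"
      by (simp add: measure_pmf_single pmf_letter_pmf)
    finally have "pmf (word_pmf (Suc n)) w = letter_weight a * pmf (word_pmf n) v" .
    thus ?thesis
      using Suc by (auto simp: Cons letter_weight_def)
  qed
qed

lemma mu_p_eq_prob:
  assumes "X \<subseteq> {w. set w \<subseteq> \<Sigma> \<and> length w = n}"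
  shows "mu_p p X = measure_pmf.prob (word_pmf n) X"
proof -
  have "mu_p p X = infsum (pmf (word_pmf n)) X"
    unfolding mu_p_def using assms by (intro infsum_cong) (auto simp: pmf_word_pmf)
  also have "\<dots> = infsetsum (pmf (word_pmf n)) X"
    by (rule infsetsum_infsum[symmetric]) (rule pmf_abs_summable)
  finally show ?thesis
    by (simp add: measure_pmf_conv_infsetsum)
qed

lemma D_subset_words: "D \<Sigma> p Q \<delta> F n b \<epsilon> \<subseteq> {w. set w \<subseteq> \<Sigma> \<and> length w = n}"
  by (auto simp: D_def)

lemma mu_p_D_le_1: "mu_p p (D \<Sigma> p Q \<delta> F n b \<epsilon>) \<le> 1"
  by (simp add: mu_p_eq_prob[OF D_subset_words])

lemma expectation_word_pmf_Suc:
  fixes f :: "'a list \<Rightarrow> real"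
  assumes "\<And>w. w \<in> set_pmf (word_pmf (Suc n)) \<Longrightarrow> \<bar>f w\<bar> \<le> B"
  shows "measure_pmf.expectation (word_pmf (Suc n)) f
           = measure_pmf.expectation letter_pmf
               (\<lambda>a. measure_pmf.expectation (word_pmf n) (\<lambda>w. f (a # w)))"
  using assms unfolding word_pmf_Suc
  by (subst expectation_bind_pmf_bounded[where B=B]) auto

lemma expectation_letter_pmf_le_single:
  assumes "\<And>b. b \<in> \<Sigma> \<Longrightarrow> 0 \<le> g b \<and> g b \<le> M" "c \<in> \<Sigma>"
  shows "measure_pmf.expectation letter_pmf g \<le> M - (M - g c) * p c"
proof -
  let ?h = "\<lambda>b. M - (M - g c) * indicator {c} b"
  have int: "integrable letter_pmf (\<lambda>b. (M - g c) * indicator {c} b)"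
    by (rule integrable_pmf_bounded[where B="\<bar>M - g c\<bar>"]) (auto simp: indicator_def)
  have "measure_pmf.expectation letter_pmf g \<le> measure_pmf.expectation letter_pmf ?h"
  proof (rule integral_mono_AE)
    show "integrable letter_pmf g"
      by (rule integrable_pmf_bounded[where B=M]) (use assms(1) in \<open>auto simp: set_letter_pmf\<close>)
    show "integrable letter_pmf ?h"
      using int by simp
    show "AE b in letter_pmf. g b \<le> ?h b"
      using assms(1) by (auto simp: AE_measure_pmf_iff set_letter_pmf indicator_def)
  qed
  also have "\<dots> = M - measure_pmf.expectation letter_pmf (\<lambda>b. (M - g c) * indicator {c} b)"
    using int by (subst Bochner_Integration.integral_diff) simp_all
  also have "\<dots> = M - (M - g c) * p c"
    using assms(2) by (simp add: measure_pmf_single pmf_letter_pmf letter_weight_def)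
  finally show ?thesis .
qed

fun path_sum :: "('q \<Rightarrow> 'a \<Rightarrow> real) \<Rightarrow> 'q \<Rightarrow> 'a list \<Rightarrow> real" where
  "path_sum h q [] = 0"
| "path_sum h q (a # w) = h q a + path_sum h (\<delta> q a) w"

definition centered :: "('q \<Rightarrow> 'a \<Rightarrow> real) \<Rightarrow> bool" where
  "centered h \<longleftrightarrow> (\<forall>s\<in>Q. measure_pmf.expectation letter_pmf (h s) = 0)"

definition bounded_by :: "real \<Rightarrow> ('q \<Rightarrow> 'a \<Rightarrow> real) \<Rightarrow> bool" where
  "bounded_by B h \<longleftrightarrow> (\<forall>s\<in>Q. \<forall>a\<in>\<Sigma>. \<bar>h s a\<bar> \<le> B)"

lemma abs_path_sum_le:
  assumes "bounded_by B h" "q \<in> Q" "set w \<subseteq> \<Sigma>"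
  shows "\<bar>path_sum h q w\<bar> \<le> B * length w"
  using assms(2,3)
proof (induction w arbitrary: q)
  case Nil
  thus ?case by simp
next
  case (Cons a w)
  have "\<bar>h q a\<bar> \<le> B"
    using assms(1) Cons.prems by (auto simp: bounded_by_def)
  moreover have "\<bar>path_sum h (\<delta> q a) w\<bar> \<le> B * length w"
    using Cons \<delta>_closed by auto
  ultimately show ?case
    by (simp add: algebra_simps)
qed

lemma abs_path_sum_word_pmf_le:
  "bounded_by B h \<Longrightarrow> q \<in> Q \<Longrightarrow> w \<in> set_pmf (word_pmf n) \<Longrightarrow> \<bar>path_sum h q w\<bar> \<le> B * n"
  using abs_path_sum_le[of B h q w] by (simp add: set_word_pmf)

lemma path_sum_squared_word_pmf_le:
  assumes "bounded_by B h" "q \<in> Q" "w \<in> set_pmf (word_pmf n)"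
  shows "\<bar>(path_sum h q w)\<^sup>2\<bar> \<le> (B * n)\<^sup>2"
  using power_mono[OF abs_path_sum_word_pmf_le[OF assms], of 2] by simp

lemma expectation_path_sum:
  assumes "bounded_by B h" "centered h" "q \<in> Q"
  shows "measure_pmf.expectation (word_pmf n) (path_sum h q) = 0"
  using assms(3)
proof (induction n arbitrary: q)
  case 0
  thus ?case by simp
next
  case (Suc n)
  have "\<And>w. w \<in> set_pmf (word_pmf (Suc n)) \<Longrightarrow> \<bar>path_sum h q w\<bar> \<le> B * Suc n"
    using abs_path_sum_word_pmf_le[OF assms(1) Suc.prems] .
  hence "measure_pmf.expectation (word_pmf (Suc n)) (path_sum h q)
         = measure_pmf.expectation letter_pmf
             (\<lambda>a. measure_pmf.expectation (word_pmf n) (\<lambda>w. h q a + path_sum h (\<delta> q a) w))"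
    by (subst expectation_word_pmf_Suc) simp_all
  also have "\<dots> = measure_pmf.expectation letter_pmf (h q)"
  proof (intro integral_cong_AE)
    show "AE a in letter_pmf. measure_pmf.expectation (word_pmf n) (\<lambda>w. h q a + path_sum h (\<delta> q a) w) = h q a"
    proof (rule AE_pmfI)
      fix a assume "a \<in> set_pmf letter_pmf"
      hence r: "\<delta> q a \<in> Q"
        using Suc.prems \<delta>_closed by (auto simp: set_letter_pmf)
      have "integrable (word_pmf n) (path_sum h (\<delta> q a))"
        using abs_path_sum_word_pmf_le[OF assms(1) r] by (rule integrable_pmf_bounded)
      thus "measure_pmf.expectation (word_pmf n) (\<lambda>w. h q a + path_sum h (\<delta> q a) w) = h q a"
        using Suc.IH[OF r] by simp
    qed
  qed auto
  finally show ?case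
    using assms(2) Suc.prems by (simp add: centered_def)
qed

lemma second_moment_path_sum:
  assumes "bounded_by B h" "centered h" "q \<in> Q"
  shows "measure_pmf.expectation (word_pmf n) (\<lambda>w. (path_sum h q w)\<^sup>2) \<le> B\<^sup>2 * n"
  using assms(3)
proof (induction n arbitrary: q)
  case 0
  thus ?case by simp
next
  case (Suc n)
  have step: "measure_pmf.expectation (word_pmf n) (\<lambda>w. (h q a + path_sum h (\<delta> q a) w)\<^sup>2)
                \<le> B\<^sup>2 + B\<^sup>2 * n" if a: "a \<in> \<Sigma>" for a
  proof -
    define r where "r = \<delta> q a"
    have r: "r \<in> Q"
      using a Suc.prems \<delta>_closed by (auto simp: r_def)
    have int: "integrable (word_pmf n) (path_sum h r)"
      using abs_path_sum_word_pmf_le[OF assms(1) r] by (rule integrable_pmf_bounded)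
    have int2: "integrable (word_pmf n) (\<lambda>w. (path_sum h r w)\<^sup>2)"
      using path_sum_squared_word_pmf_le[OF assms(1) r] by (rule integrable_pmf_bounded)
    have "(\<lambda>w. (h q a + path_sum h r w)\<^sup>2) = (\<lambda>w. ((h q a)\<^sup>2 + 2 * h q a * path_sum h r w) + (path_sum h r w)\<^sup>2)"
      by (auto simp: power2_sum)
    hence "measure_pmf.expectation (word_pmf n) (\<lambda>w. (h q a + path_sum h r w)\<^sup>2)
             = (h q a)\<^sup>2 + 2 * h q a * measure_pmf.expectation (word_pmf n) (path_sum h r)
               + measure_pmf.expectation (word_pmf n) (\<lambda>w. (path_sum h r w)\<^sup>2)"
      using int int2 by simp
    moreover have "\<bar>h q a\<bar> \<le> B"
      using assms(1) Suc.prems a by (auto simp: bounded_by_def)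
    hence "(h q a)\<^sup>2 \<le> B\<^sup>2"
      using power_mono[of "\<bar>h q a\<bar>" B 2] by simp
    ultimately show ?thesis
      using Suc.IH[OF r] expectation_path_sum[OF assms(1,2) r] by (simp add: r_def)
  qed
  have "\<And>w. w \<in> set_pmf (word_pmf (Suc n)) \<Longrightarrow> \<bar>(path_sum h q w)\<^sup>2\<bar> \<le> (B * Suc n)\<^sup>2"
    using path_sum_squared_word_pmf_le[OF assms(1) Suc.prems] .
  hence "measure_pmf.expectation (word_pmf (Suc n)) (\<lambda>w. (path_sum h q w)\<^sup>2)
         = measure_pmf.expectation letter_pmf
             (\<lambda>a. measure_pmf.expectation (word_pmf n) (\<lambda>w. (h q a + path_sum h (\<delta> q a) w)\<^sup>2))"
    by (subst expectation_word_pmf_Suc) simp_all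
  also have "\<dots> \<le> B\<^sup>2 + B\<^sup>2 * n"
  proof (rule expectation_pmf_le_const[where B="(B * Suc n)\<^sup>2"])
    fix a assume a: "a \<in> set_pmf letter_pmf"
    thus "measure_pmf.expectation (word_pmf n) (\<lambda>w. (h q a + path_sum h (\<delta> q a) w)\<^sup>2) \<le> B\<^sup>2 + B\<^sup>2 * n"
      using step by (simp add: set_letter_pmf)
    show "\<bar>measure_pmf.expectation (word_pmf n) (\<lambda>w. (h q a + path_sum h (\<delta> q a) w)\<^sup>2)\<bar> \<le> (B * Suc n)\<^sup>2"
    proof (rule abs_expectation_pmf_le)
      fix w assume "w \<in> set_pmf (word_pmf n)"
      hence "a # w \<in> set_pmf (word_pmf (Suc n))"
        using a by (simp add: set_word_pmf set_letter_pmf)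
      from path_sum_squared_word_pmf_le[OF assms(1) Suc.prems this]
      show "\<bar>(h q a + path_sum h (\<delta> q a) w)\<^sup>2\<bar> \<le> (B * Suc n)\<^sup>2" by simp
    qed
  qed
  finally show ?case
    by (simp add: algebra_simps)
qed

lemma prob_path_sum_ge:
  assumes "bounded_by B h" "centered h" "q \<in> Q" "t > 0"
  shows "measure_pmf.prob (word_pmf n) {w. t \<le> \<bar>path_sum h q w\<bar>} \<le> B\<^sup>2 * n / t\<^sup>2"
proof -
  have "measure_pmf.prob (word_pmf n) {w. t \<le> \<bar>path_sum h q w\<bar>}
          \<le> measure_pmf.expectation (word_pmf n) (\<lambda>w. (path_sum h q w)\<^sup>2) / t\<^sup>2"
    using abs_path_sum_word_pmf_le[OF assms(1,3)] assms(4) by (rule Chebyshev_pmf)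
  also have "\<dots> \<le> B\<^sup>2 * n / t\<^sup>2"
    using second_moment_path_sum[OF assms(1-3)] by (intro divide_right_mono) auto
  finally show ?thesis .
qed

definition count_increment :: "'a \<Rightarrow> 'q \<Rightarrow> 'a \<Rightarrow> real" where
  "count_increment c s a = (if s \<in> F then (if a = c then 1 else 0) - p c else 0)"

lemma path_sum_count_increment:
  "path_sum (count_increment c) q w
     = real (count_list (sel_sub \<delta> F q w) c) - p c * real (length (sel_sub \<delta> F q w))"
  by (induction w arbitrary: q) (auto simp: count_increment_def algebra_simps)

lemma count_increment_bounded: "c \<in> \<Sigma> \<Longrightarrow> bounded_by 1 (count_increment c)"
  using p_pos p_le_1 by (fastforce simp: bounded_by_def count_increment_def)

lemma count_increment_centered:
  assumes "c \<in> \<Sigma>"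
  shows "centered (count_increment c)"
  unfolding centered_def
proof
  fix s assume "s \<in> Q"
  have "integrable letter_pmf (indicator {c} :: 'a \<Rightarrow> real)"
    by (rule integrable_pmf_bounded[where B=1]) (auto simp: indicator_def)
  hence "measure_pmf.expectation letter_pmf (\<lambda>a. indicator {c} a - p c) = 0"
    using assms by (simp add: measure_pmf_single pmf_letter_pmf letter_weight_def)
  moreover have "count_increment c s = (\<lambda>a. if s \<in> F then indicator {c} a - p c else 0)"
    by (auto simp: count_increment_def indicator_def)
  ultimately show "measure_pmf.expectation letter_pmf (count_increment c s) = 0"
    by (cases "s \<in> F") auto
qed

text \<open>The letters outside the finite set S have total mass at most \<epsilon>/4, hence occur at
  most \<epsilon>/2 of the time once the letters of S occur with the right frequencies.\<close>

lemma frequency_close: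
  fixes l :: "'a list" and \<epsilon> \<eta> :: real
  assumes S: "finite S" "S \<subseteq> \<Sigma>" "1 - sum p S \<le> \<epsilon>/4"
    and \<eta>: "0 \<le> \<eta>" "(card S + 1) * \<eta> \<le> \<epsilon>/4"
    and l: "l \<noteq> []"
    and dev: "\<And>c. c \<in> S \<Longrightarrow> \<bar>count_list l c - p c * length l\<bar> \<le> \<eta> * length l"
    and a: "a \<in> \<Sigma>"
  shows "\<bar>count_list l a / length l - p a\<bar> \<le> \<epsilon>/2"
proof -
  define len where "len = real (length l)"
  have len: "0 < len"
    using l by (simp add: len_def)
  have "1 * \<eta> \<le> (card S + 1) * \<eta>"
    using \<eta>(1) by (intro mult_right_mono) auto
  hence \<eta>_le: "\<eta> \<le> \<epsilon>/4"
    using \<eta>(2) by linarith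
  have "\<bar>count_list l a - p a * len\<bar> \<le> \<epsilon>/2 * len"
  proof (cases "a \<in> S")
    case True
    have "\<eta> * len \<le> \<epsilon>/2 * len"
      using \<eta>_le \<eta>(1) len by (intro mult_right_mono) auto
    thus ?thesis
      using dev[OF True] by (simp add: len_def)
  next
    case False
    have "count_list l a + (\<Sum>c\<in>S. count_list l c) \<le> length l"
      using sum_count_list_le_length[of "insert a S" l] S False by simp
    hence total: "count_list l a + (\<Sum>c\<in>S. real (count_list l c)) \<le> len"
      unfolding len_def by (metis of_nat_add of_nat_le_iff of_nat_sum)
    have "(\<Sum>c\<in>S. p c * len - \<eta> * len) \<le> (\<Sum>c\<in>S. real (count_list l c))"
    proof (rule sum_mono)
      fix c assume "c \<in> S"
      from dev[OF this] show "p c * len - \<eta> * len \<le> real (count_list l c)"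
        unfolding len_def abs_le_iff by linarith
    qed
    hence "len * sum p S - card S * \<eta> * len \<le> (\<Sum>c\<in>S. real (count_list l c))"
      by (simp add: sum_subtractf sum_distrib_left algebra_simps)
    moreover have "len * (1 - sum p S) \<le> len * (\<epsilon>/4)"
      using S(3) len by (intro mult_left_mono) auto
    moreover have "card S * \<eta> * len \<le> \<epsilon>/4 * len"
      using \<eta> len by (intro mult_right_mono) (auto simp: algebra_simps)
    ultimately have count: "count_list l a \<le> \<epsilon>/2 * len"
      using total by (simp add: algebra_simps)
    have "p a \<le> \<epsilon>/4"
      using sum_p_le_1[of "insert a S"] S False a by simp
    hence "p a * len \<le> \<epsilon>/4 * len"
      using len by (intro mult_right_mono) auto
    moreover have "0 \<le> p a * len"
      using p_pos[OF a] len by simp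
    ultimately show ?thesis
      using count unfolding abs_le_iff by simp
  qed
  hence "\<bar>(count_list l a - p a * len) / len\<bar> \<le> \<epsilon>/2"
    using len by (simp add: divide_le_eq)
  thus ?thesis
    using len by (simp add: diff_divide_distrib len_def)
qed

end

section \<open>From a drift function to the theorem\<close>

locale drift_dfa = bernoulli_dfa \<Sigma> p Q \<delta> F
  for \<Sigma> :: "'a set" and p and Q :: "'q set" and \<delta> and F +
  fixes V :: "'q \<Rightarrow> real" and M :: real
  assumes M_nonneg: "0 \<le> M"
    and V_bounds: "s \<in> Q \<Longrightarrow> 0 \<le> V s \<and> V s \<le> M"
    and V_drift: "s \<in> Q \<Longrightarrow> s \<notin> F \<Longrightarrow>
                    measure_pmf.expectation letter_pmf (\<lambda>a. V (\<delta> s a)) \<le> V s - 1"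
begin

definition expected_V :: "'q \<Rightarrow> real" where
  "expected_V s = measure_pmf.expectation letter_pmf (\<lambda>a. V (\<delta> s a))"

definition drift_increment :: "'q \<Rightarrow> 'a \<Rightarrow> real" where
  "drift_increment s a = V (\<delta> s a) - expected_V s"

lemma expected_V_bounds:
  assumes "s \<in> Q"
  shows "0 \<le> expected_V s \<and> expected_V s \<le> M"
proof -
  have V: "0 \<le> V (\<delta> s a) \<and> V (\<delta> s a) \<le> M" if "a \<in> set_pmf letter_pmf" for a
    using that assms V_bounds \<delta>_closed by (simp add: set_letter_pmf)
  show ?thesis
    unfolding expected_V_def
    by (intro conjI expectation_pmf_ge_const[where B=M] expectation_pmf_le_const[where B=M])
      (use V in auto)
qed

lemma drift_increment_bounded: "bounded_by M drift_increment"
  unfolding bounded_by_def drift_increment_def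
  using V_bounds \<delta>_closed expected_V_bounds by (smt (verit))

lemma drift_increment_centered: "centered drift_increment"
  unfolding centered_def drift_increment_def[abs_def]
proof
  fix s assume s: "s \<in> Q"
  have "integrable letter_pmf (\<lambda>a. V (\<delta> s a))"
    by (rule integrable_pmf_bounded[where B=M])
      (use s V_bounds \<delta>_closed in \<open>auto simp: set_letter_pmf\<close>)
  thus "measure_pmf.expectation letter_pmf (\<lambda>a. V (\<delta> s a) - expected_V s) = 0"
    by (simp add: expected_V_def)
qed

text \<open>Telescoping: every step outside F gains 1, a step inside F loses at most M.\<close>

lemma path_sum_drift_increment_ge:
  "q \<in> Q \<Longrightarrow> set w \<subseteq> \<Sigma> \<Longrightarrow>
     V (dfa_run \<delta> q w) - V q + length w - (M + 1) * length (sel_sub \<delta> F q w)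
       \<le> path_sum drift_increment q w"
proof (induction w arbitrary: q)
  case Nil
  thus ?case by simp
next
  case (Cons a w)
  have r: "\<delta> q a \<in> Q"
    using Cons.prems \<delta>_closed by auto
  have IH: "V (dfa_run \<delta> q (a # w)) - V (\<delta> q a) + length w - (M + 1) * length (sel_sub \<delta> F (\<delta> q a) w)
             \<le> path_sum drift_increment (\<delta> q a) w"
    using Cons.IH[OF r] Cons.prems(2) by simp
  have "- V q + 1 - (M + 1) * (if q \<in> F then 1 else 0) \<le> - expected_V q"
    using expected_V_bounds[OF Cons.prems(1)] V_bounds[OF Cons.prems(1)]
      V_drift[OF Cons.prems(1)] by (auto simp: expected_V_def)
  moreover have "path_sum drift_increment q (a # w)
                   = V (\<delta> q a) - expected_V q + path_sum drift_increment (\<delta> q a) w"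
    by (simp add: drift_increment_def)
  moreover have "(M + 1) * length (sel_sub \<delta> F q (a # w))
                   = (M + 1) * (if q \<in> F then 1 else 0) + (M + 1) * length (sel_sub \<delta> F (\<delta> q a) w)"
    by (simp add: algebra_simps)
  ultimately show ?case
    using IH by simp
qed

lemma length_sel_sub_gt:
  assumes "q \<in> Q" "set w \<subseteq> \<Sigma>" "4 * M \<le> length w"
    and "\<bar>path_sum drift_increment q w\<bar> < length w / 2"
  shows "length w / (4 * M + 4) < length (sel_sub \<delta> F q w)"
proof -
  have "0 \<le> V (dfa_run \<delta> q w)" "V q \<le> M"
    using V_bounds dfa_run_in_Q assms(1,2) by auto
  hence "length w / 4 < (M + 1) * length (sel_sub \<delta> F q w)"
    using path_sum_drift_increment_ge[OF assms(1,2)] assms(3,4) by linarith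
  thus ?thesis
    using M_nonneg by (simp add: field_simps)
qed

definition atypical_words :: "'a set \<Rightarrow> real \<Rightarrow> nat \<Rightarrow> 'a list set" where
  "atypical_words S \<eta> n = (\<Union>q\<in>Q. {w. real n / 2 \<le> \<bar>path_sum drift_increment q w\<bar>}
     \<union> (\<Union>c\<in>S. {w. \<eta> * n \<le> \<bar>path_sum (count_increment c) q w\<bar>}))"

lemma prob_atypical_words_le:
  assumes "n > 0" "finite S" "S \<subseteq> \<Sigma>" "\<eta> > 0"
  shows "measure_pmf.prob (word_pmf n) (atypical_words S \<eta> n) \<le> card Q * (4 * M\<^sup>2 + card S / \<eta>\<^sup>2) / n"
proof -
  have "measure_pmf.prob (word_pmf n) ({w. real n / 2 \<le> \<bar>path_sum drift_increment q w\<bar>}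
          \<union> (\<Union>c\<in>S. {w. \<eta> * n \<le> \<bar>path_sum (count_increment c) q w\<bar>}))
          \<le> 4 * M\<^sup>2 / n + card S / (\<eta>\<^sup>2 * n)" if q: "q \<in> Q" for q
  proof -
    have drift: "measure_pmf.prob (word_pmf n) {w. real n / 2 \<le> \<bar>path_sum drift_increment q w\<bar>}
                   \<le> M\<^sup>2 * n / (real n / 2)\<^sup>2"
      by (rule prob_path_sum_ge[OF drift_increment_bounded drift_increment_centered q])
        (use assms(1) in simp)
    have "measure_pmf.prob (word_pmf n) {w. \<eta> * n \<le> \<bar>path_sum (count_increment c) q w\<bar>}
            \<le> (1::real)\<^sup>2 * n / (\<eta> * n)\<^sup>2" if "c \<in> S" for c
      by (rule prob_path_sum_ge)
        (use assms that q in \<open>auto intro: count_increment_bounded count_increment_centered\<close>)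
    hence count: "measure_pmf.prob (word_pmf n) (\<Union>c\<in>S. {w. \<eta> * n \<le> \<bar>path_sum (count_increment c) q w\<bar>})
                    \<le> (\<Sum>c\<in>S. (1::real)\<^sup>2 * n / (\<eta> * n)\<^sup>2)"
      using assms(2) by (rule measure_pmf_UN_le[rotated])
    have "measure_pmf.prob (word_pmf n) ({w. real n / 2 \<le> \<bar>path_sum drift_increment q w\<bar>}
            \<union> (\<Union>c\<in>S. {w. \<eta> * n \<le> \<bar>path_sum (count_increment c) q w\<bar>}))
            \<le> M\<^sup>2 * n / (real n / 2)\<^sup>2 + (\<Sum>c\<in>S. (1::real)\<^sup>2 * n / (\<eta> * n)\<^sup>2)"
      by (rule order.trans[OF measure_Un_le add_mono[OF drift count]]) auto
    also have "\<dots> = 4 * M\<^sup>2 / n + card S / (\<eta>\<^sup>2 * n)"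
      using assms(1,4) by (simp add: field_simps power2_eq_square)
    finally show ?thesis .
  qed
  hence "measure_pmf.prob (word_pmf n) (atypical_words S \<eta> n)
           \<le> (\<Sum>q\<in>Q. 4 * M\<^sup>2 / n + card S / (\<eta>\<^sup>2 * n))"
    unfolding atypical_words_def using finite_Q by (intro measure_pmf_UN_le)
  thus ?thesis
    using assms(1) by (simp add: field_simps)
qed

lemma typical_word_in_D:
  assumes w: "w \<in> set_pmf (word_pmf n)" "4 * M \<le> n"
    and S: "finite S" "S \<subseteq> \<Sigma>" "1 - sum p S \<le> \<epsilon>/4" and "\<epsilon> > 0"
    and typical: "w \<notin> atypical_words S (\<epsilon> / 4 / (card S + 1) / (4 * M + 4)) n"
  shows "w \<in> D \<Sigma> p Q \<delta> F n (1 / (4 * M + 4)) \<epsilon>"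
proof -
  define \<eta> where "\<eta> = \<epsilon> / 4 / (card S + 1)"
  have \<eta>: "0 \<le> \<eta>" "(card S + 1) * \<eta> \<le> \<epsilon>/4"
    using \<open>\<epsilon> > 0\<close> by (simp_all add: \<eta>_def field_simps)
  have w_word: "set w \<subseteq> \<Sigma>" "length w = n"
    using w(1) by (simp_all add: set_word_pmf)
  have "w \<in> D_q \<Sigma> p \<delta> F n (1 / (4 * M + 4)) \<epsilon> q" if q: "q \<in> Q" for q
  proof -
    define l where "l = sel_sub \<delta> F q w"
    have small: "\<bar>path_sum drift_increment q w\<bar> < n / 2"
      "\<And>c. c \<in> S \<Longrightarrow> \<bar>path_sum (count_increment c) q w\<bar> < \<eta> / (4 * M + 4) * n"
      using typical q by (auto simp: atypical_words_def \<eta>_def not_le)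
    have long: "n / (4 * M + 4) < length l"
      using length_sel_sub_gt[OF q w_word(1)] small(1) w_word(2) w(2) by (simp add: l_def)
    hence "l \<noteq> []"
      using M_nonneg by (auto simp: divide_less_0_iff)
    have "\<eta> / (4 * M + 4) * n = \<eta> * (n / (4 * M + 4))"
      by simp
    also have "\<dots> \<le> \<eta> * length l"
      using long \<eta>(1) by (intro mult_left_mono) auto
    finally have "\<bar>count_list l c - p c * length l\<bar> \<le> \<eta> * length l" if "c \<in> S" for c
      using small(2)[OF that] path_sum_count_increment[of c q w] by (simp add: l_def)
    hence "\<bar>count_list l a / length l - p a\<bar> \<le> \<epsilon>/2" if "a \<in> \<Sigma>" for a
      using frequency_close[OF S \<eta> \<open>l \<noteq> []\<close> _ that] by blast
    hence "(SUP a\<in>\<Sigma>. \<bar>count_list l a / length l - p a\<bar>) \<le> \<epsilon>/2"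
      using \<Sigma>_nonempty by (intro cSUP_least) auto
    thus ?thesis
      using long w_word \<open>\<epsilon> > 0\<close> by (simp add: D_q_def l_def)
  qed
  thus ?thesis
    using w_word by (simp add: D_def)
qed

lemma mu_p_D_ge:
  assumes "4 * M \<le> n" "finite S" "S \<subseteq> \<Sigma>" "1 - sum p S \<le> \<epsilon>/4" "\<epsilon> > 0"
  shows "1 - measure_pmf.prob (word_pmf n) (atypical_words S (\<epsilon> / 4 / (card S + 1) / (4 * M + 4)) n)
           \<le> mu_p p (D \<Sigma> p Q \<delta> F n (1 / (4 * M + 4)) \<epsilon>)"
proof -
  let ?A = "atypical_words S (\<epsilon> / 4 / (card S + 1) / (4 * M + 4)) n"
  have "set_pmf (word_pmf n) \<inter> (UNIV - ?A) \<subseteq> D \<Sigma> p Q \<delta> F n (1 / (4 * M + 4)) \<epsilon>"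
    using assms typical_word_in_D by blast
  hence "measure_pmf.prob (word_pmf n) (UNIV - ?A)
           \<le> measure_pmf.prob (word_pmf n) (D \<Sigma> p Q \<delta> F n (1 / (4 * M + 4)) \<epsilon>)"
    by (subst measure_Int_set_pmf[symmetric]) (auto intro!: measure_pmf.finite_measure_mono)
  thus ?thesis
    using measure_pmf.prob_compl[of ?A "word_pmf n"] by (simp add: mu_p_eq_prob[OF D_subset_words])
qed

lemma tendsto_mu_p_D:
  assumes "\<epsilon> > 0"
  shows "(\<lambda>n. mu_p p (D \<Sigma> p Q \<delta> F n (1 / (4 * M + 4)) \<epsilon>)) \<longlonglongrightarrow> 1"
proof -
  obtain S where S: "finite S" "S \<subseteq> \<Sigma>" "1 - sum p S \<le> \<epsilon>/4"
    using finite_subset_mass_close[of "\<epsilon>/4"] assms by auto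
  define \<eta> where "\<eta> = \<epsilon> / 4 / (card S + 1) / (4 * M + 4)"
  have "\<eta> > 0"
    using assms M_nonneg by (simp add: \<eta>_def)
  define K where "K = card Q * (4 * M\<^sup>2 + card S / \<eta>\<^sup>2)"
  have "eventually (\<lambda>n. 1 - K / n \<le> mu_p p (D \<Sigma> p Q \<delta> F n (1 / (4 * M + 4)) \<epsilon>)) sequentially"
  proof (rule eventually_sequentiallyI[of "nat \<lceil>4 * M\<rceil> + 1"])
    fix n assume "nat \<lceil>4 * M\<rceil> + 1 \<le> n"
    hence n: "4 * M \<le> n" "n > 0"
      by linarith+
    show "1 - K / n \<le> mu_p p (D \<Sigma> p Q \<delta> F n (1 / (4 * M + 4)) \<epsilon>)"
      using prob_atypical_words_le[OF n(2) S(1,2) \<open>\<eta> > 0\<close>] mu_p_D_ge[OF n(1) S assms]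
      unfolding K_def \<eta>_def by linarith
  qed
  moreover have "eventually (\<lambda>n. mu_p p (D \<Sigma> p Q \<delta> F n (1 / (4 * M + 4)) \<epsilon>) \<le> 1) sequentially"
    by (intro always_eventually allI mu_p_D_le_1)
  moreover have "(\<lambda>n. 1 - K / real n) \<longlonglongrightarrow> 1"
    using tendsto_diff[OF tendsto_const lim_const_over_n[of K]] by simp
  ultimately show ?thesis
    using tendsto_const by (rule tendsto_sandwich)
qed

end

section \<open>A drift function from strong connectivity\<close>

lemma geometric_potential_step:
  fixes \<pi> C :: real
  assumes "0 < \<pi>" "\<pi> < 1" "C = 1 / ((1 - \<pi>) * \<pi> ^ K)" "i < k"
  shows "C * (1 - \<pi> ^ K) - (C * (1 - \<pi> ^ K) - C * (1 - \<pi> ^ i)) * \<pi> \<le> C * (1 - \<pi> ^ k) - 1"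
proof -
  have C: "0 < C" "C * ((1 - \<pi>) * \<pi> ^ K) = 1"
    using assms(1-3) by simp_all
  have "C * (1 - \<pi> ^ K) - (C * (1 - \<pi> ^ K) - C * (1 - \<pi> ^ i)) * \<pi>
          = C * (1 - \<pi> ^ Suc i) - C * ((1 - \<pi>) * \<pi> ^ K)"
    by (simp add: algebra_simps)
  also have "\<dots> = C * (1 - \<pi> ^ Suc i) - 1"
    using C(2) by simp
  also have "\<pi> ^ k \<le> \<pi> ^ Suc i"
    using assms(1,2,4) by (intro power_decreasing) auto
  hence "C * (1 - \<pi> ^ Suc i) \<le> C * (1 - \<pi> ^ k)"
    using C(1) by (intro mult_left_mono) auto
  finally show ?thesis
    by simp
qed

locale strongly_connected_dfa = bernoulli_dfa \<Sigma> p Q \<delta> F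
  for \<Sigma> :: "'a set" and p and Q :: "'q set" and \<delta> and F +
  assumes F_nonempty: "F \<noteq> {}"
    and strongly_connected: "strongly_connected Q \<Sigma> \<delta>"
begin

definition transitions :: "('q \<times> 'q) set" where
  "transitions = {(r, \<delta> r a) | r a. r \<in> Q \<and> a \<in> \<Sigma>}"

definition dist_F :: "'q \<Rightarrow> nat" where
  "dist_F s = (LEAST k. \<exists>f\<in>F. (s, f) \<in> transitions ^^ k)"

lemma reaches_F:
  assumes "s \<in> Q"
  shows "\<exists>k. \<exists>f\<in>F. (s, f) \<in> transitions ^^ k"
proof -
  obtain f where f: "f \<in> F"
    using F_nonempty by auto
  hence "(s, f) \<in> transitions\<^sup>*"
    using strongly_connected assms F_subset
    unfolding strongly_connected_def transitions_def by auto
  thus ?thesis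
    using f by (auto simp: rtrancl_power)
qed

lemma dist_F_descent:
  assumes "s \<in> Q" "s \<notin> F"
  shows "\<exists>c\<in>\<Sigma>. dist_F (\<delta> s c) < dist_F s"
proof -
  obtain f where f: "f \<in> F" "(s, f) \<in> transitions ^^ dist_F s"
    using LeastI_ex[OF reaches_F[OF assms(1)]] unfolding dist_F_def by blast
  then obtain j where j: "dist_F s = Suc j"
    using assms(2) by (cases "dist_F s") auto
  then obtain y where y: "(s, y) \<in> transitions" "(y, f) \<in> transitions ^^ j"
    using f(2) relpow_Suc_D2 by metis
  have "dist_F y \<le> j"
    unfolding dist_F_def using f(1) y(2) by (auto intro: Least_le)
  moreover obtain c where "c \<in> \<Sigma>" "y = \<delta> s c"
    using y(1) by (auto simp: transitions_def)
  ultimately show ?thesis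
    using j by (metis le_imp_less_Suc)
qed

lemma descending_letters:
  obtains c \<pi> where "0 < \<pi>" "\<pi> < 1"
    and "\<And>s. s \<in> Q - F \<Longrightarrow> c s \<in> \<Sigma> \<and> dist_F (\<delta> s (c s)) < dist_F s \<and> \<pi> \<le> p (c s)"
proof -
  have "\<forall>s\<in>Q - F. \<exists>c\<in>\<Sigma>. dist_F (\<delta> s c) < dist_F s"
    using dist_F_descent by blast
  then obtain c where c: "\<And>s. s \<in> Q - F \<Longrightarrow> c s \<in> \<Sigma> \<and> dist_F (\<delta> s (c s)) < dist_F s"
    by metis
  define \<pi> where "\<pi> = Min (insert (1/2) ((\<lambda>s. p (c s)) ` (Q - F)))"
  have fin: "finite (insert (1/2) ((\<lambda>s. p (c s)) ` (Q - F)))"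
    using finite_Q by simp
  have "0 < \<pi>"
    unfolding \<pi>_def using fin c p_pos by (subst Min_gr_iff) force+
  moreover have "\<pi> \<le> 1/2"
    unfolding \<pi>_def using fin by (intro Min_le) auto
  moreover have "\<pi> \<le> p (c s)" if "s \<in> Q - F" for s
    unfolding \<pi>_def using fin that by simp
  ultimately show ?thesis
    using that c by force
qed

text \<open>With \<pi> a lower bound for the probabilities of distance-decreasing letters and K
  the largest distance to F, the potential C (1 - \<pi>^d) of a state at distance d to F
  works with C = 1 / ((1 - \<pi>) \<pi>^K).\<close>

lemma drift_function_exists: "\<exists>V M. drift_dfa \<Sigma> p Q \<delta> F V M"
proof -
  obtain c \<pi> where \<pi>: "0 < \<pi>" "\<pi> < 1"
    and c: "\<And>s. s \<in> Q - F \<Longrightarrow> c s \<in> \<Sigma> \<and> dist_F (\<delta> s (c s)) < dist_F s \<and> \<pi> \<le> p (c s)"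
    using descending_letters by blast
  define K where "K = Max (dist_F ` Q)"
  have K: "dist_F s \<le> K" if "s \<in> Q" for s
    unfolding K_def using finite_Q that by simp
  define C where "C = 1 / ((1 - \<pi>) * \<pi> ^ K)"
  define V where "V s = C * (1 - \<pi> ^ dist_F s)" for s
  have C: "0 < C"
    using \<pi> by (simp add: C_def)
  have V_nonneg: "0 \<le> V s" for s
    using \<pi> C by (simp add: V_def power_le_one)
  have V_le: "V s \<le> C * (1 - \<pi> ^ K)" if "s \<in> Q" for s
    using \<pi> C K[OF that] by (simp add: V_def power_decreasing)
  have "drift_dfa \<Sigma> p Q \<delta> F V C"
  proof (intro drift_dfa.intro drift_dfa_axioms.intro)
    show "bernoulli_dfa \<Sigma> p Q \<delta> F"
      by (rule bernoulli_dfa_axioms)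
    show "0 \<le> C"
      using C by simp
    show "0 \<le> V s \<and> V s \<le> C" if "s \<in> Q" for s
      using V_nonneg V_le[OF that] C \<pi> by (auto intro: order.trans[of _ "C * (1 - \<pi> ^ K)"])
    fix s assume s: "s \<in> Q" "s \<notin> F"
    let ?Vmax = "C * (1 - \<pi> ^ K)"
    have cs: "c s \<in> \<Sigma>" "dist_F (\<delta> s (c s)) < dist_F s"
      using c s by auto
    have "measure_pmf.expectation letter_pmf (\<lambda>a. V (\<delta> s a))
            \<le> ?Vmax - (?Vmax - V (\<delta> s (c s))) * p (c s)"
      by (rule expectation_letter_pmf_le_single) (use V_nonneg V_le \<delta>_closed s cs in auto)
    also have "\<dots> \<le> ?Vmax - (?Vmax - V (\<delta> s (c s))) * \<pi>"
      using V_le[OF \<delta>_closed[OF s(1) cs(1)]] c s by (intro diff_left_mono mult_left_mono) auto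
    also have "\<dots> \<le> V s - 1"
      unfolding V_def by (rule geometric_potential_step[OF \<pi> C_def cs(2)])
    finally show "measure_pmf.expectation letter_pmf (\<lambda>a. V (\<delta> s a)) \<le> V s - 1" .
  qed
  thus ?thesis
    by blast
qed

end

theorem lemma5p7:
  fixes \<Sigma> :: "'a set" and p :: "'a \<Rightarrow> real"
    and Q :: "'q set" and \<delta> :: "'q \<Rightarrow> 'a \<Rightarrow> 'q" and q\<^sub>s :: 'q and F :: "'q set"
  assumes "\<Sigma> \<noteq> {}" and "countable \<Sigma>"
    and "\<forall>a\<in>\<Sigma>. 0 < p a \<and> p a \<le> 1"
    and "(p has_sum 1) \<Sigma>"
    and "finite Q" and "\<forall>q\<in>Q. \<forall>a\<in>\<Sigma>. \<delta> q a \<in> Q"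
    and "q\<^sub>s \<in> Q" and "F \<subseteq> Q" and "F \<noteq> {}"
    and "strongly_connected Q \<Sigma> \<delta>"
  shows "\<exists>b::real. 0 < b \<and> b \<le> 1 \<and>
           (\<forall>\<epsilon>>0. (\<lambda>n. mu_p p (D \<Sigma> p Q \<delta> F n b \<epsilon>)) \<longlonglongrightarrow> 1)"
proof -
  interpret strongly_connected_dfa \<Sigma> p Q \<delta> F
    by unfold_locales (use assms in auto)
  obtain V M where "drift_dfa \<Sigma> p Q \<delta> F V M"
    using drift_function_exists by blast
  then interpret drift_dfa \<Sigma> p Q \<delta> F V M .
  show ?thesis
    using M_nonneg tendsto_mu_p_D by (intro exI[of _ "1 / (4 * M + 4)"]) auto
qed

end
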